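(* Let $C\in C^1(I;\mathbb R^n)$ satisfy $|\partial_\theta C(\theta,v)|=l(v)$ for all $(\theta,v)$, where $l:[0,1]\to(0,\infty)$ is continuous, and set $f(\theta,v)=\langle T(\theta,v),\partial_vC(\theta,v)\rangle$. For $\varphi\in C^1([0,1];\mathbb R)$ let $\widetilde C_\varphi(\theta,v)=C(\theta+\varphi(v),v)$. Then $$\inf_{\varphi}\int_I|\pi_{\widetilde T}\,\partial_v\widetilde C_\varphi|^2\,d\theta\,dv=\int_0^1\int_{S^1}\Big(f(\theta,v)-\frac1{2\pi}\int_{S^1}f(s,v)\,ds\Big)^2d\theta\,dv,$$ where $\widetilde T$ denotes the unit tangent of $\widetilde C_\varphi$.
   Context: $S^1=\mathbb R/2\pi\mathbb Z$, $I=S^1\times[0,1]$; $T=\partial_\theta C/|\partial_\theta C|$; $\pi_T w=\langle w,T\rangle T$. *)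

theory Defs
  imports "HOL-Analysis.Analysis"
begin

text \<open>Curves on the cylinder I = S^1 x [0,1], S^1 = R / 2 pi Z, represented by
  functions of two real variables that are 2 pi-periodic in the first one.\<close>

definition dtheta :: "(real \<Rightarrow> real \<Rightarrow> 'a::real_normed_vector) \<Rightarrow> real \<Rightarrow> real \<Rightarrow> 'a" where
  "dtheta F \<theta> v = vector_derivative (\<lambda>s. F s v) (at \<theta>)"

definition dv :: "(real \<Rightarrow> real \<Rightarrow> 'a::real_normed_vector) \<Rightarrow> real \<Rightarrow> real \<Rightarrow> 'a" where
  "dv F \<theta> v = vector_derivative (\<lambda>w. F \<theta> w) (at v within {0..1})"

definition unit_tangent :: "(real \<Rightarrow> real \<Rightarrow> 'a::real_normed_vector) \<Rightarrow> real \<Rightarrow> real \<Rightarrow> 'a" where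
  "unit_tangent F \<theta> v = (1 / norm (dtheta F \<theta> v)) *\<^sub>R dtheta F \<theta> v"

definition projT :: "'a::real_inner \<Rightarrow> 'a \<Rightarrow> 'a" where
  "projT T w = (inner w T) *\<^sub>R T"

definition C1_cyl :: "(real \<Rightarrow> real \<Rightarrow> 'a::real_normed_vector) \<Rightarrow> bool" where
  "C1_cyl C \<longleftrightarrow> (\<forall>\<theta> v. C (\<theta> + 2 * pi) v = C \<theta> v) \<and>
     (\<exists>D. (\<forall>p \<in> UNIV \<times> {0..1}.
            ((\<lambda>q. C (fst q) (snd q)) has_derivative D p) (at p within UNIV \<times> {0..1})) \<and>
          continuous_on (UNIV \<times> {0..1}) (\<lambda>p. D p (1, 0)) \<and>
          continuous_on (UNIV \<times> {0..1}) (\<lambda>p. D p (0, 1)))"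

definition C1_interval :: "(real \<Rightarrow> real) \<Rightarrow> bool" where
  "C1_interval \<phi> \<longleftrightarrow> (\<exists>\<phi>'. (\<forall>v \<in> {0..1}. (\<phi> has_real_derivative \<phi>' v) (at v within {0..1}))
                          \<and> continuous_on {0..1} \<phi>')"

end

theory Submission
  imports Defs
begin

(* Reparametrising by phi moves the base point from theta to theta + phi v and adds
   phi' v times the theta-derivative to the v-derivative. The new unit tangent at
   (theta, v) is T (theta + phi v, v), so the tangential part of the new v-derivative is
   phi' v * l v + f (theta + phi v) v. By 2 pi-periodicity the shift by phi v does not
   change the theta-integral, and splitting f(., v) into its mean m v and its fluctuation gives
     energy(phi) = int_0^1 int_0^(2 pi) (f - m)^2 + 2 pi int_0^1 (phi' l + m)^2.
   The last term is non-negative and vanishes for phi' = - m / l, so the infimum is a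
   minimum and equals the first term. *)

lemma integral_periodic_shift:
  fixes h :: "real \<Rightarrow> real"
  assumes h_cont: "continuous_on UNIV h" and h_periodic: "\<And>x. h (x + p) = h x" and "0 \<le> p"
  shows "integral {0..p} (\<lambda>t. h (t + c)) = integral {0..p} h"
proof -
  define r where "r = \<bar>c\<bar>"
  define F where "F x = integral {-r..x} h" for x
  have F_deriv: "(F has_real_derivative h x) (at x within {-r..r + p})" if "x \<in> {-r..r + p}" for x
    unfolding F_def using that
    by (intro integral_has_real_derivative continuous_on_subset[OF h_cont]) auto
  have shifted: "integral {0..p} (\<lambda>t. h (t + y)) = F (y + p) - F y" if "y \<in> {-r..r}" for y
  proof -
    have "integral {0..p} (\<lambda>t. h (t + y)) = integral {y..y + p} h"
      using integral_shift_real_ivl[of y y "y + p" h] by simp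
    also have "\<dots> = F (y + p) - F y"
      unfolding F_def using that \<open>0 \<le> p\<close>
        Henstock_Kurzweil_Integration.integral_combine[where a="-r" and b="y + p" and c=y and f=h]
        integrable_continuous_interval[OF continuous_on_subset[OF h_cont]]
      by force
    finally show ?thesis .
  qed
  \<comment> \<open>The integral over a window of length p has derivative h (y + p) - h y = 0 in its
    left end y.\<close>
  have "\<exists>k. \<forall>y\<in>{-r..r}. F (y + p) - F y = k"
  proof (rule has_field_derivative_zero_constant)
    fix y assume y: "y \<in> {-r..r}"
    have "(F has_real_derivative h (y + p)) (at (y + p) within (\<lambda>y. y + p) ` {-r..r})"
      using y \<open>0 \<le> p\<close> by (intro DERIV_subset[OF F_deriv]) auto
    from DERIV_image_chain[OF this DERIV_add[OF DERIV_ident DERIV_const]]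
    have "((\<lambda>y. F (y + p)) has_real_derivative h (y + p)) (at y within {-r..r})"
      by (simp add: o_def)
    moreover have "(F has_real_derivative h y) (at y within {-r..r})"
      using y \<open>0 \<le> p\<close> by (intro DERIV_subset[OF F_deriv]) auto
    ultimately show "((\<lambda>y. F (y + p) - F y) has_real_derivative 0) (at y within {-r..r})"
      using DERIV_diff h_periodic by fastforce
  qed simp
  then obtain k where k: "\<And>y. y \<in> {-r..r} \<Longrightarrow> integral {0..p} (\<lambda>t. h (t + y)) = k"
    using shifted by metis
  have "c \<in> {-r..r}" "0 \<in> {-r..r}"
    by (auto simp: r_def)
  from k[OF this(1)] k[OF this(2)] show ?thesis
    by simp
qed

lemma integral_square_mean_decomposition:
  fixes h :: "real \<Rightarrow> real"
  assumes h_cont: "continuous_on {a..b} h" and "a \<le> b"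
  defines "m \<equiv> integral {a..b} h / (b - a)"
  shows "integral {a..b} (\<lambda>t. (c + h t)\<^sup>2)
           = integral {a..b} (\<lambda>t. (h t - m)\<^sup>2) + (b - a) * (c + m)\<^sup>2"
proof -
  have "(b - a) * m = integral {a..b} h"
    using \<open>a \<le> b\<close> by (cases "a = b") (simp_all add: m_def)
  then have "((\<lambda>t. h t - m) has_integral 0) {a..b}"
    using has_integral_diff[OF integrable_integral[OF integrable_continuous_interval[OF h_cont]]
        has_integral_const_real[of m a b]] \<open>a \<le> b\<close>
    by (simp add: mult.commute)
  moreover have "((\<lambda>t. (h t - m)\<^sup>2) has_integral integral {a..b} (\<lambda>t. (h t - m)\<^sup>2)) {a..b}"
    by (intro integrable_integral integrable_continuous_interval continuous_intros h_cont)
  ultimately have "((\<lambda>t. (h t - m)\<^sup>2 + 2 * (c + m) * (h t - m) + (c + m)\<^sup>2) has_integral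
      integral {a..b} (\<lambda>t. (h t - m)\<^sup>2) + 2 * (c + m) * 0 + (b - a) * (c + m)\<^sup>2) {a..b}"
    using has_integral_const_real[of "(c + m)\<^sup>2" a b] \<open>a \<le> b\<close>
    by (intro has_integral_add has_integral_mult_right) auto
  moreover have "(h t - m)\<^sup>2 + 2 * (c + m) * (h t - m) + (c + m)\<^sup>2 = (c + h t)\<^sup>2" for t
    by (simp add: power2_eq_square algebra_simps)
  ultimately show ?thesis
    using integral_unique by simp
qed

lemma integral_prod_continuous_swap:
  fixes g :: "real \<Rightarrow> real \<Rightarrow> 'a::banach"
  assumes "continuous_on ({a..b} \<times> {c..d}) (\<lambda>(x, y). g x y)"
  shows "integral ({a..b} \<times> {c..d}) (\<lambda>(x, y). g x y)
           = integral {c..d} (\<lambda>y. integral {a..b} (\<lambda>x. g x y))"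
proof -
  have "integral ({a..b} \<times> {c..d}) (\<lambda>(x, y). g x y)
          = integral {a..b} (\<lambda>x. integral {c..d} (\<lambda>y. g x y))"
    using integral_prod_continuous[of a c b d "\<lambda>(x, y). g x y"] assms
    by (simp add: cbox_Pair_eq)
  also have "\<dots> = integral {c..d} (\<lambda>y. integral {a..b} (\<lambda>x. g x y))"
    using integral_swap_continuous[of a c b d g] assms
    by (simp add: cbox_Pair_eq)
  finally show ?thesis .
qed

lemma linear_apply_Pair:
  fixes D :: "real \<times> real \<Rightarrow> 'a::real_vector"
  assumes "linear D"
  shows "D (x, y) = x *\<^sub>R D (1, 0) + y *\<^sub>R D (0, 1)"
proof -
  have "(x, y) = x *\<^sub>R (1, 0) + y *\<^sub>R (0, 1)"
    by simp
  then show ?thesis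
    by (simp only: linear_add[OF assms] linear_scale[OF assms])
qed

lemma has_vector_derivative_compose_Pair:
  fixes F :: "real \<Rightarrow> real \<Rightarrow> 'a::real_normed_vector"
  assumes F: "((\<lambda>q. F (fst q) (snd q)) has_derivative D) (at (x t, y t) within S)"
    and x: "(x has_real_derivative x') (at t within T)"
    and y: "(y has_real_derivative y') (at t within T)"
    and "(\<lambda>t. (x t, y t)) ` T \<subseteq> S"
  shows "((\<lambda>t. F (x t) (y t)) has_vector_derivative x' *\<^sub>R D (1, 0) + y' *\<^sub>R D (0, 1))
           (at t within T)"
proof -
  have "((\<lambda>t. (x t, y t)) has_derivative (\<lambda>h. (x' * h, y' * h))) (at t within T)"
    using x y unfolding has_field_derivative_def by (rule has_derivative_Pair)
  moreover have "((\<lambda>q. F (fst q) (snd q)) has_derivative D)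
      (at (x t, y t) within (\<lambda>t. (x t, y t)) ` T)"
    using F assms(4) by (rule has_derivative_subset)
  ultimately have "((\<lambda>t. F (x t) (y t)) has_derivative (\<lambda>h. D (x' * h, y' * h))) (at t within T)"
    using diff_chain_within unfolding o_def by fastforce
  moreover have "D (x' * h, y' * h) = h *\<^sub>R (x' *\<^sub>R D (1, 0) + y' *\<^sub>R D (0, 1))" for h
    using linear_apply_Pair[OF has_derivative_linear[OF F], of "x' * h" "y' * h"]
    by (simp add: scaleR_add_right mult.commute)
  ultimately show ?thesis
    by (simp add: has_vector_derivative_def)
qed

(* No differentiability assumption: if g has no derivative at x + c, both sides are the
   same junk value SOME d. False. *)
lemma vector_derivative_at_shift:
  fixes g :: "real \<Rightarrow> 'a::real_normed_vector"
  shows "vector_derivative (\<lambda>s. g (s + c)) (at x) = vector_derivative g (at (x + c))"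
proof -
  have shift: "((\<lambda>s. g (s + c)) has_vector_derivative d) (at x)"
    if "(g has_vector_derivative d) (at (x + c))" for g :: "real \<Rightarrow> 'a" and c x d
  proof -
    have "((\<lambda>s. s + c) has_vector_derivative 1) (at x)"
      by (auto intro!: derivative_eq_intros)
    from vector_diff_chain_at[OF this] that show ?thesis
      by (simp add: o_def)
  qed
  have "((\<lambda>s. g (s + c)) has_vector_derivative d) (at x) \<longleftrightarrow> (g has_vector_derivative d) (at (x + c))"
    for d
    using shift[where g=g and c=c and x=x] shift[where g="\<lambda>s. g (s + c)" and c="-c" and x="x + c"]
    by auto
  then show ?thesis
    by (simp add: vector_derivative_def)
qed

lemma dtheta_eq_derivative:
  assumes D: "\<forall>p \<in> UNIV \<times> {0..1}.
      ((\<lambda>q. C (fst q) (snd q)) has_derivative D p) (at p within UNIV \<times> {0..1})"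
    and "v \<in> {0..1}"
  shows "dtheta C \<theta> v = D (\<theta>, v) (1, 0)"
proof -
  have "((\<lambda>s. C s v) has_vector_derivative 1 *\<^sub>R D (\<theta>, v) (1, 0) + 0 *\<^sub>R D (\<theta>, v) (0, 1))
      (at \<theta>)"
    using D \<open>v \<in> {0..1}\<close>
    by (intro has_vector_derivative_compose_Pair[where x="\<lambda>s. s" and y="\<lambda>_. v"
          and S="UNIV \<times> {0..1}"]) (auto intro!: derivative_eq_intros)
  then show ?thesis
    unfolding dtheta_def by (simp add: vector_derivative_at)
qed

lemma dv_reparam_eq_derivative:
  assumes D: "\<forall>p \<in> UNIV \<times> {0..1}.
      ((\<lambda>q. C (fst q) (snd q)) has_derivative D p) (at p within UNIV \<times> {0..1})"
    and v: "v \<in> {0..1}" and \<phi>: "(\<phi> has_real_derivative \<phi>') (at v within {0..1})"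
  shows "dv (\<lambda>s w. C (s + \<phi> w) w) \<theta> v = \<phi>' *\<^sub>R D (\<theta> + \<phi> v, v) (1, 0) + D (\<theta> + \<phi> v, v) (0, 1)"
proof -
  have "((\<lambda>w. C (\<theta> + \<phi> w) w) has_vector_derivative
      \<phi>' *\<^sub>R D (\<theta> + \<phi> v, v) (1, 0) + 1 *\<^sub>R D (\<theta> + \<phi> v, v) (0, 1)) (at v within {0..1})"
    using D v \<phi>
    by (intro has_vector_derivative_compose_Pair[where x="\<lambda>w. \<theta> + \<phi> w" and y="\<lambda>w. w"
          and S="UNIV \<times> {0..1}"]) (auto intro!: derivative_eq_intros)
  then show ?thesis
    unfolding dv_def using v vector_derivative_within_cbox[of 0 1 v] by simp
qed

lemma dv_eq_derivative:
  assumes "\<forall>p \<in> UNIV \<times> {0..1}.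
      ((\<lambda>q. C (fst q) (snd q)) has_derivative D p) (at p within UNIV \<times> {0..1})"
    and "v \<in> {0..1}"
  shows "dv C \<theta> v = D (\<theta>, v) (0, 1)"
  using dv_reparam_eq_derivative[OF assms, of "\<lambda>_. 0" 0 \<theta>] by simp

lemma continuous_on_dtheta:
  assumes "C1_cyl C"
  shows "continuous_on (UNIV \<times> {0..1}) (\<lambda>p. dtheta C (fst p) (snd p))"
proof -
  obtain D where D: "\<forall>p \<in> UNIV \<times> {0..1}.
      ((\<lambda>q. C (fst q) (snd q)) has_derivative D p) (at p within UNIV \<times> {0..1})"
    and cont: "continuous_on (UNIV \<times> {0..1}) (\<lambda>p. D p (1, 0))"
    using assms unfolding C1_cyl_def by blast
  show ?thesis
    using cont by (rule continuous_on_eq) (clarsimp simp: dtheta_eq_derivative[OF D])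
qed

lemma continuous_on_dv:
  assumes "C1_cyl C"
  shows "continuous_on (UNIV \<times> {0..1}) (\<lambda>p. dv C (fst p) (snd p))"
proof -
  obtain D where D: "\<forall>p \<in> UNIV \<times> {0..1}.
      ((\<lambda>q. C (fst q) (snd q)) has_derivative D p) (at p within UNIV \<times> {0..1})"
    and cont: "continuous_on (UNIV \<times> {0..1}) (\<lambda>p. D p (0, 1))"
    using assms unfolding C1_cyl_def by blast
  show ?thesis
    using cont by (rule continuous_on_eq) (clarsimp simp: dv_eq_derivative[OF D])
qed

lemma dtheta_reparam:
  "dtheta (\<lambda>s w. C (s + \<phi> w) w) \<theta> v = dtheta C (\<theta> + \<phi> v) v"
  unfolding dtheta_def by (rule vector_derivative_at_shift)

lemma unit_tangent_reparam:
  "unit_tangent (\<lambda>s w. C (s + \<phi> w) w) \<theta> v = unit_tangent C (\<theta> + \<phi> v) v"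
  unfolding unit_tangent_def dtheta_reparam ..

lemma dv_reparam:
  assumes "C1_cyl C" and v: "v \<in> {0..1}"
    and \<phi>: "(\<phi> has_real_derivative \<phi>') (at v within {0..1})"
  shows "dv (\<lambda>s w. C (s + \<phi> w) w) \<theta> v = \<phi>' *\<^sub>R dtheta C (\<theta> + \<phi> v) v + dv C (\<theta> + \<phi> v) v"
proof -
  obtain D where "\<forall>p \<in> UNIV \<times> {0..1}.
      ((\<lambda>q. C (fst q) (snd q)) has_derivative D p) (at p within UNIV \<times> {0..1})"
    using assms(1) unfolding C1_cyl_def by blast
  with v \<phi> show ?thesis
    by (simp add: dv_reparam_eq_derivative dtheta_eq_derivative dv_eq_derivative)
qed

lemma dtheta_periodic:
  assumes "\<And>\<theta> v. C (\<theta> + p) v = C \<theta> v"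
  shows "dtheta C (\<theta> + p) v = dtheta C \<theta> v"
  using dtheta_reparam[of C "\<lambda>_. p" \<theta> v] assms by simp

lemma dv_periodic:
  assumes "\<And>\<theta> v. C (\<theta> + p) v = C \<theta> v"
  shows "dv C (\<theta> + p) v = dv C \<theta> v"
  unfolding dv_def assms ..

lemma norm_projT:
  assumes "norm T = 1"
  shows "norm (projT T w) = \<bar>inner w T\<bar>"
  using assms unfolding projT_def by simp

lemma norm_unit_tangent:
  assumes "dtheta C \<theta> v \<noteq> 0"
  shows "norm (unit_tangent C \<theta> v) = 1"
  using assms unfolding unit_tangent_def by simp

lemma inner_dtheta_unit_tangent:
  "inner (dtheta C \<theta> v) (unit_tangent C \<theta> v) = norm (dtheta C \<theta> v)"
  unfolding unit_tangent_def by (simp add: power2_norm_eq_inner[symmetric] power2_eq_square)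

lemma tangential_component_reparam:
  assumes "C1_cyl C" "v \<in> {0..1}" "(\<phi> has_real_derivative \<phi>') (at v within {0..1})"
    and "dtheta C (\<theta> + \<phi> v) v \<noteq> 0"
  shows "norm (projT (unit_tangent (\<lambda>s w. C (s + \<phi> w) w) \<theta> v) (dv (\<lambda>s w. C (s + \<phi> w) w) \<theta> v))
           = \<bar>\<phi>' * norm (dtheta C (\<theta> + \<phi> v) v)
               + inner (unit_tangent C (\<theta> + \<phi> v) v) (dv C (\<theta> + \<phi> v) v)\<bar>"
proof -
  let ?p = "\<theta> + \<phi> v"
  have "inner (\<phi>' *\<^sub>R dtheta C ?p v + dv C ?p v) (unit_tangent C ?p v)
      = \<phi>' * norm (dtheta C ?p v) + inner (unit_tangent C ?p v) (dv C ?p v)"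
    by (simp add: inner_add_left inner_dtheta_unit_tangent inner_commute[of "dv C ?p v"])
  then show ?thesis
    using norm_unit_tangent[OF assms(4)]
    by (simp add: unit_tangent_reparam dv_reparam[OF assms(1-3)] norm_projT)
qed

definition tangential_energy :: "(real \<Rightarrow> real \<Rightarrow> 'a::real_inner) \<Rightarrow> real" where
  "tangential_energy C = integral ({0..2 * pi} \<times> {0..1})
     (\<lambda>(\<theta>, v). (norm (projT (unit_tangent C \<theta> v) (dv C \<theta> v)))\<^sup>2)"

locale cylinder_curve =
  fixes C :: "real \<Rightarrow> real \<Rightarrow> 'a::real_inner" and l :: "real \<Rightarrow> real"
  assumes C1: "C1_cyl C"
    and l_cont: "continuous_on {0..1} l"
    and l_pos: "\<And>v. v \<in> {0..1} \<Longrightarrow> 0 < l v"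
    and speed: "\<And>\<theta> v. v \<in> {0..1} \<Longrightarrow> norm (dtheta C \<theta> v) = l v"
begin

definition tangential_dv :: "real \<Rightarrow> real \<Rightarrow> real" where
  "tangential_dv \<theta> v = inner (unit_tangent C \<theta> v) (dv C \<theta> v)"

definition tangential_dv_mean :: "real \<Rightarrow> real" where
  "tangential_dv_mean v = (1 / (2 * pi)) * integral {0..2 * pi} (\<lambda>s. tangential_dv s v)"

definition tangential_dv_sq_deviation :: "real \<Rightarrow> real" where
  "tangential_dv_sq_deviation v =
     integral {0..2 * pi} (\<lambda>\<theta>. (tangential_dv \<theta> v - tangential_dv_mean v)\<^sup>2)"

lemma continuous_on_tangential_dv:
  "continuous_on (UNIV \<times> {0..1}) (\<lambda>p. tangential_dv (fst p) (snd p))"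
proof -
  have "continuous_on (UNIV \<times> {0..1}) (\<lambda>p. l (snd p))"
    by (rule continuous_on_compose2[OF l_cont continuous_on_snd]) auto
  moreover have "\<forall>p \<in> UNIV \<times> {0..1}. l (snd p) \<noteq> 0"
    using l_pos by (metis less_irrefl mem_Times_iff)
  ultimately have "continuous_on (UNIV \<times> {0..1})
      (\<lambda>p. inner (dtheta C (fst p) (snd p)) (dv C (fst p) (snd p)) / l (snd p))"
    by (intro continuous_on_divide continuous_on_inner continuous_on_dtheta continuous_on_dv C1)
  then show ?thesis
    by (rule continuous_on_eq) (auto simp: tangential_dv_def unit_tangent_def speed)
qed

lemma tangential_dv_periodic: "tangential_dv (\<theta> + 2 * pi) v = tangential_dv \<theta> v"
proof -
  have periodic: "C (\<theta> + 2 * pi) v = C \<theta> v" for \<theta> v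
    using C1 unfolding C1_cyl_def by blast
  show ?thesis
    by (simp add: tangential_dv_def unit_tangent_def dtheta_periodic[of C, OF periodic]
        dv_periodic[of C, OF periodic])
qed

lemma continuous_on_tangential_dv_swapped:
  "continuous_on ({0..1} \<times> {0..2 * pi}) (\<lambda>q. tangential_dv (snd q) (fst q))"
proof -
  have "continuous_on ({0..1} \<times> {0..2 * pi}) (\<lambda>q. (snd q, fst q))"
    by (intro continuous_intros)
  moreover have "(\<lambda>q. (snd q, fst q)) ` ({0..1} \<times> {0..2 * pi}) \<subseteq> UNIV \<times> {0..1}"
    by auto
  ultimately have "continuous_on ({0..1} \<times> {0..2 * pi})
      (\<lambda>q. tangential_dv (fst (snd q, fst q)) (snd (snd q, fst q)))"
    by (rule continuous_on_compose2[OF continuous_on_tangential_dv])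
  then show ?thesis
    by simp
qed

lemma continuous_on_tangential_dv_mean: "continuous_on {0..1} tangential_dv_mean"
proof -
  have "continuous_on {0..1} (\<lambda>v. integral {0..2 * pi} (\<lambda>\<theta>. tangential_dv \<theta> v))"
    using integral_continuous_on_param[of "{0..1}" 0 "2 * pi" "\<lambda>v \<theta>. tangential_dv \<theta> v"]
      continuous_on_tangential_dv_swapped
    by (simp add: case_prod_beta')
  then show ?thesis
    unfolding tangential_dv_mean_def by (rule continuous_on_mult_left)
qed

lemma continuous_on_tangential_dv_sq_deviation: "continuous_on {0..1} tangential_dv_sq_deviation"
proof -
  have "continuous_on ({0..1} \<times> {0..2 * pi}) (\<lambda>q. tangential_dv_mean (fst q))"
    by (rule continuous_on_compose2[OF continuous_on_tangential_dv_mean continuous_on_fst]) auto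
  then have "continuous_on ({0..1} \<times> {0..2 * pi})
      (\<lambda>q. (tangential_dv (snd q) (fst q) - tangential_dv_mean (fst q))\<^sup>2)"
    by (intro continuous_on_power continuous_on_diff continuous_on_tangential_dv_swapped)
  then show ?thesis
    using integral_continuous_on_param[of "{0..1}" 0 "2 * pi"
        "\<lambda>v \<theta>. (tangential_dv \<theta> v - tangential_dv_mean v)\<^sup>2"]
    unfolding tangential_dv_sq_deviation_def by (simp add: case_prod_beta')
qed

lemma continuous_on_shifted_tangential_dv_square:
  assumes "continuous_on {0..1} \<phi>" and "continuous_on {0..1} a"
  shows "continuous_on ({0..2 * pi} \<times> {0..1}) (\<lambda>(\<theta>, v). (a v + tangential_dv (\<theta> + \<phi> v) v)\<^sup>2)"
proof -
  have on_snd: "continuous_on ({0..2 * pi} \<times> {0..1}) (\<lambda>q. g (snd q))"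
    if "continuous_on {0..1} g" for g :: "real \<Rightarrow> real"
    by (rule continuous_on_compose2[OF that continuous_on_snd]) auto
  have "continuous_on ({0..2 * pi} \<times> {0..1})
      (\<lambda>q. tangential_dv (fst (fst q + \<phi> (snd q), snd q)) (snd (fst q + \<phi> (snd q), snd q)))"
    using assms(1)
    by (intro continuous_on_compose2[OF continuous_on_tangential_dv] continuous_on_Pair
        continuous_on_add continuous_on_fst continuous_on_snd continuous_on_id on_snd) auto
  then show ?thesis
    unfolding case_prod_beta'
    by (intro continuous_on_power continuous_on_add on_snd assms(2)) simp
qed

lemma integral_shifted_tangential_dv_square:
  assumes "v \<in> {0..1}"
  shows "integral {0..2 * pi} (\<lambda>\<theta>. (a + tangential_dv (\<theta> + c) v)\<^sup>2)
           = tangential_dv_sq_deviation v + 2 * pi * (a + tangential_dv_mean v)\<^sup>2"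
proof -
  have "continuous_on UNIV (\<lambda>\<theta>. tangential_dv (fst (\<theta>, v)) (snd (\<theta>, v)))"
    using assms by (intro continuous_on_compose2[OF continuous_on_tangential_dv]
        continuous_on_Pair continuous_on_id continuous_on_const) auto
  then have cont: "continuous_on UNIV (\<lambda>\<theta>. tangential_dv \<theta> v)"
    by simp
  have "integral {0..2 * pi} (\<lambda>\<theta>. (a + tangential_dv (\<theta> + c) v)\<^sup>2)
      = integral {0..2 * pi} (\<lambda>\<theta>. (a + tangential_dv \<theta> v)\<^sup>2)"
    by (rule integral_periodic_shift)
      (auto intro!: continuous_intros cont simp: tangential_dv_periodic)
  also have "\<dots> = tangential_dv_sq_deviation v + 2 * pi * (a + tangential_dv_mean v)\<^sup>2"
    using integral_square_mean_decomposition[of 0 "2 * pi" "\<lambda>\<theta>. tangential_dv \<theta> v" a]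
      continuous_on_subset[OF cont]
    by (simp add: tangential_dv_sq_deviation_def tangential_dv_mean_def)
  finally show ?thesis .
qed

lemma tangential_energy_reparam:
  assumes \<phi>: "\<And>v. v \<in> {0..1} \<Longrightarrow> (\<phi> has_real_derivative \<phi>' v) (at v within {0..1})"
    and \<phi>'_cont: "continuous_on {0..1} \<phi>'"
  shows "tangential_energy (\<lambda>s w. C (s + \<phi> w) w)
           = integral {0..1} tangential_dv_sq_deviation
             + 2 * pi * integral {0..1} (\<lambda>v. (\<phi>' v * l v + tangential_dv_mean v)\<^sup>2)"
proof -
  define G where "G \<theta> v = (\<phi>' v * l v + tangential_dv (\<theta> + \<phi> v) v)\<^sup>2" for \<theta> v
  have integrand: "(norm (projT (unit_tangent (\<lambda>s w. C (s + \<phi> w) w) \<theta> v)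
      (dv (\<lambda>s w. C (s + \<phi> w) w) \<theta> v)))\<^sup>2 = G \<theta> v" if "v \<in> {0..1}" for \<theta> v
  proof -
    have "dtheta C (\<theta> + \<phi> v) v \<noteq> 0"
      using speed[OF that, of "\<theta> + \<phi> v"] l_pos[OF that] by auto
    from tangential_component_reparam[OF C1 that \<phi>[OF that] this] show ?thesis
      by (simp add: G_def speed[OF that] tangential_dv_def)
  qed
  have G_cont: "continuous_on ({0..2 * pi} \<times> {0..1}) (\<lambda>(\<theta>, v). G \<theta> v)"
    unfolding G_def using DERIV_continuous_on[OF \<phi>] \<phi>'_cont l_cont
    by (intro continuous_on_shifted_tangential_dv_square continuous_on_mult)
  have square_integrable: "(\<lambda>v. (\<phi>' v * l v + tangential_dv_mean v)\<^sup>2) integrable_on {0..1}"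
    by (intro integrable_continuous_interval continuous_on_power continuous_on_add
        continuous_on_mult \<phi>'_cont l_cont continuous_on_tangential_dv_mean)
  have "tangential_energy (\<lambda>s w. C (s + \<phi> w) w)
      = integral ({0..2 * pi} \<times> {0..1}) (\<lambda>(\<theta>, v). G \<theta> v)"
    unfolding tangential_energy_def
    by (rule Henstock_Kurzweil_Integration.integral_cong) (auto simp: integrand)
  also have "\<dots> = integral {0..1} (\<lambda>v. integral {0..2 * pi} (\<lambda>\<theta>. G \<theta> v))"
    by (rule integral_prod_continuous_swap[OF G_cont])
  also have "\<dots> = integral {0..1} (\<lambda>v. tangential_dv_sq_deviation v
      + 2 * pi * (\<phi>' v * l v + tangential_dv_mean v)\<^sup>2)"
    unfolding G_def
    by (rule Henstock_Kurzweil_Integration.integral_cong)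
      (rule integral_shifted_tangential_dv_square)
  also have "\<dots> = integral {0..1} tangential_dv_sq_deviation
      + 2 * pi * integral {0..1} (\<lambda>v. (\<phi>' v * l v + tangential_dv_mean v)\<^sup>2)"
    using square_integrable
    by (simp add: integral_add integrable_on_cmult_left
        integrable_continuous_interval[OF continuous_on_tangential_dv_sq_deviation])
  finally show ?thesis .
qed

lemma tangential_energy_reparam_ge:
  assumes "C1_interval \<phi>"
  shows "integral {0..1} tangential_dv_sq_deviation \<le> tangential_energy (\<lambda>s w. C (s + \<phi> w) w)"
proof -
  obtain \<phi>' where \<phi>: "\<forall>v \<in> {0..1}. (\<phi> has_real_derivative \<phi>' v) (at v within {0..1})"
    and \<phi>'_cont: "continuous_on {0..1} \<phi>'"
    using assms unfolding C1_interval_def by blast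
  have "0 \<le> integral {0..1} (\<lambda>v. (\<phi>' v * l v + tangential_dv_mean v)\<^sup>2)"
    by (intro integral_nonneg integrable_continuous_interval continuous_on_power continuous_on_add
        continuous_on_mult \<phi>'_cont l_cont continuous_on_tangential_dv_mean) simp
  with tangential_energy_reparam[OF \<phi>[rule_format] \<phi>'_cont] show ?thesis
    by simp
qed

definition optimal_phase :: "real \<Rightarrow> real" where
  "optimal_phase v = integral {0..v} (\<lambda>w. - tangential_dv_mean w / l w)"

lemma continuous_on_optimal_phase_derivative:
  "continuous_on {0..1} (\<lambda>v. - tangential_dv_mean v / l v)"
  using l_pos
  by (intro continuous_on_divide continuous_on_minus continuous_on_tangential_dv_mean l_cont) force

lemma optimal_phase_has_derivative:
  assumes "v \<in> {0..1}"
  shows "(optimal_phase has_real_derivative - tangential_dv_mean v / l v) (at v within {0..1})"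
  unfolding optimal_phase_def[abs_def]
  using continuous_on_optimal_phase_derivative assms by (rule integral_has_real_derivative)

lemma C1_interval_optimal_phase: "C1_interval optimal_phase"
  unfolding C1_interval_def
  by (intro exI[of _ "\<lambda>v. - tangential_dv_mean v / l v"] conjI ballI
      optimal_phase_has_derivative continuous_on_optimal_phase_derivative)

lemma tangential_energy_optimal_phase:
  "tangential_energy (\<lambda>s w. C (s + optimal_phase w) w) = integral {0..1} tangential_dv_sq_deviation"
proof -
  have pointwise: "(- tangential_dv_mean v / l v * l v + tangential_dv_mean v)\<^sup>2 = 0"
    if "v \<in> {0..1}" for v
    using l_pos[OF that] by simp
  have "integral {0..1} (\<lambda>v. (- tangential_dv_mean v / l v * l v + tangential_dv_mean v)\<^sup>2) = 0"
    using pointwise by (intro integral_unique has_integral_is_0)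
  then show ?thesis
    using tangential_energy_reparam[OF optimal_phase_has_derivative
        continuous_on_optimal_phase_derivative]
    by simp
qed

lemma INF_tangential_energy_reparam:
  "(INF \<phi> \<in> {\<phi>. C1_interval \<phi>}. tangential_energy (\<lambda>s w. C (s + \<phi> w) w))
     = integral {0..1} tangential_dv_sq_deviation"
proof (rule cInf_eq_minimum)
  show "integral {0..1} tangential_dv_sq_deviation
      \<in> (\<lambda>\<phi>. tangential_energy (\<lambda>s w. C (s + \<phi> w) w)) ` {\<phi>. C1_interval \<phi>}"
    by (rule image_eqI[where x = optimal_phase])
      (simp_all add: tangential_energy_optimal_phase C1_interval_optimal_phase)
qed (auto intro: tangential_energy_reparam_ge)

end

theorem mainTheorem5:
  fixes C :: "real \<Rightarrow> real \<Rightarrow> real ^ 'n" and l :: "real \<Rightarrow> real"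
  assumes C1: "C1_cyl C"
    and l_cont: "continuous_on {0..1} l"
    and l_pos: "\<forall>v \<in> {0..1}. l v > 0"
    and speed: "\<forall>\<theta>. \<forall>v \<in> {0..1}. norm (dtheta C \<theta> v) = l v"
  defines "f \<equiv> (\<lambda>\<theta> v. inner (unit_tangent C \<theta> v) (dv C \<theta> v))"
  shows "(INF \<phi> \<in> {\<phi>. C1_interval \<phi>}.
            integral ({0..2 * pi} \<times> {0..1})
              (\<lambda>(\<theta>, v). (norm (projT (unit_tangent (\<lambda>s w. C (s + \<phi> w) w) \<theta> v)
                                      (dv (\<lambda>s w. C (s + \<phi> w) w) \<theta> v)))\<^sup>2))
         = integral {0..1} (\<lambda>v. integral {0..2 * pi}
              (\<lambda>\<theta>. (f \<theta> v - (1 / (2 * pi)) * integral {0..2 * pi} (\<lambda>s. f s v))\<^sup>2))"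
proof -
  interpret cylinder_curve C l
    using C1 l_cont l_pos speed by unfold_locales auto
  have f_eq: "f = tangential_dv"
    unfolding f_def tangential_dv_def[abs_def] ..
  show ?thesis
    using INF_tangential_energy_reparam
    unfolding f_eq tangential_energy_def tangential_dv_sq_deviation_def[abs_def]
      tangential_dv_mean_def .
qed

end
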